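(* If $B^{(0)}(X,Y),\dots,B^{(\ell)}(X,Y)\in\mathbb F_q[X,Y]$ is a basis of the $\mathbb F_q[X]$-module $M_{s,\ell}$, then $G(X)^{s+1},\,B^{(0)}(X,Y)(Y-R(X)),\dots,B^{(\ell)}(X,Y)(Y-R(X))$ is a basis of $M_{s+1,\ell+1}$.
   Context: Let $\mathbb F_q$ be a finite field and $n<q$. Let $\alpha_0,\dots,\alpha_{n-1}$ be distinct nonzero elements of $\mathbb F_q$, $w_0,\dots,w_{n-1}$ nonzero elements of $\mathbb F_q$, $r\in\mathbb F_q^n$, $r_i'=r_i/w_i$, $G(X)=\prod_i(X-\alpha_i)$, and $R(X)$ the unique polynomial of degree less than $n$ with $R(\alpha_i)=r_i'$. For positive integers $s\le\ell$, $M_{s,\ell}$ is the $\mathbb F_q[X]$-module of all $Q\in\mathbb F_q[X,Y]$ of $Y$-degree at most $\ell$ such that for every $i$, $Q(X+\alpha_i,Y+r_i')$ has no monomials of total degree less than $s$. *)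

theory Defs
  imports "HOL-Computational_Algebra.Polynomial"
begin

text \<open>Bivariate polynomials in F[X,Y] are represented as elements of type
  'a poly poly: polynomials in Y whose coefficients are polynomials in X.
  The Y-degree is 'degree', and coeff (coeff Q j) i is the coefficient of X^i Y^j.\<close>

definition shiftXY :: "'a::comm_ring_1 poly poly \<Rightarrow> 'a \<Rightarrow> 'a \<Rightarrow> 'a poly poly" where
  "shiftXY Q a b = pcompose (map_poly (\<lambda>c. pcompose c [:a, 1:]) Q) [:[:b:], 1:]"
  \<comment> \<open>Q(X + a, Y + b)\<close>

definition no_low_monomials :: "nat \<Rightarrow> 'a::zero poly poly \<Rightarrow> bool" where
  "no_low_monomials s Q \<longleftrightarrow> (\<forall>i j. i + j < s \<longrightarrow> coeff (coeff Q j) i = 0)"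

definition M_mod :: "(nat \<Rightarrow> 'a::comm_ring_1) \<Rightarrow> (nat \<Rightarrow> 'a) \<Rightarrow> nat \<Rightarrow> nat \<Rightarrow> nat \<Rightarrow> 'a poly poly set" where
  "M_mod \<alpha> r' n s l = {Q. degree Q \<le> l \<and> (\<forall>i<n. no_low_monomials s (shiftXY Q (\<alpha> i) (r' i)))}"

definition is_module_basis :: "'a::comm_ring_1 poly poly set \<Rightarrow> nat \<Rightarrow> (nat \<Rightarrow> 'a poly poly) \<Rightarrow> bool" where
  "is_module_basis M k B \<longleftrightarrow> (\<forall>i<k. B i \<in> M) \<and>
     (\<forall>Q\<in>M. \<exists>!c. (\<forall>i\<ge>k. c i = 0) \<and> Q = (\<Sum>i<k. smult (c i) (B i)))"

end

theory Submission
  imports Defs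
begin

text \<open>Let L = Y - R(X). Because R(alpha_i) = r'_i, the shift (X, Y) to (X + alpha_i, Y + r'_i)
  turns L into Y - T with T(0) = 0, so multiplying by L raises the order of vanishing at every
  point (alpha_i, r'_i) by one, and dividing an element of M_{s+1,l+1} by L lowers it by one.
  Dividing Q in M_{s+1,l+1} by L, which is monic in Y, gives Q = L Q' + E(X) with Q' in M_{s,l}
  and E = Q(X, R(X)); substituting Y = R shows that E vanishes to order s + 1 at every alpha_i,
  so G^{s+1} divides E. Uniqueness of the representation follows by evaluating at Y = R and
  then cancelling L.\<close>

lemma map_poly_hom_add:
  assumes "f 0 = 0" "\<And>x y. f (x + y) = f x + f y"
  shows "map_poly f (p + q) = map_poly f p + map_poly f q"
  by (intro poly_eqI) (simp add: coeff_map_poly assms)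

lemma map_poly_hom_mult:
  assumes "f 0 = 0" "\<And>x y. f (x + y) = f x + f y" "\<And>x y. f (x * y) = f x * f y"
  shows "map_poly f (p * q) = map_poly f p * map_poly f q"
proof (induction p)
  case (pCons a p)
  have "map_poly f (pCons a p * q) = map_poly f (smult a q + pCons 0 (p * q))"
    by simp
  also have "\<dots> = smult (f a) (map_poly f q) + pCons 0 (map_poly f p * map_poly f q)"
    by (simp add: map_poly_hom_add[OF assms(1,2)] map_poly_smult assms map_poly_pCons pCons.IH)
  finally show ?case
    by (simp add: map_poly_pCons assms)
qed simp

lemma pcompose_dvd_pcompose: "p dvd q \<Longrightarrow> pcompose p r dvd pcompose q r"
  by (auto simp: pcompose_mult elim!: dvdE)

lemma pcompose_power_left: "pcompose (p ^ m) q = pcompose p q ^ m"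
  by (induction m) (simp_all add: pcompose_mult pcompose_1)

lemma linear_power_dvd_iff_pcompose:
  fixes E :: "'a::comm_ring_1 poly"
  shows "[:-a, 1:] ^ m dvd E \<longleftrightarrow> [:0, 1:] ^ m dvd pcompose E [:a, 1:]"
proof
  have shift: "pcompose [:c, 1:] [:-c, 1:] = [:0, 1:]" for c :: 'a
    by (simp add: pcompose_pCons)
  show "[:0, 1:] ^ m dvd pcompose E [:a, 1:]" if "[:-a, 1:] ^ m dvd E"
    using pcompose_dvd_pcompose[OF that, of "[:a, 1:]"] shift[of "-a"]
    by (simp add: pcompose_power_left)
  assume "[:0, 1:] ^ m dvd pcompose E [:a, 1:]"
  from pcompose_dvd_pcompose[OF this, of "[:-a, 1:]"] show "[:-a, 1:] ^ m dvd E"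
    by (simp add: pcompose_power_left pcompose_assoc[symmetric] shift pcompose_pCons)
qed

lemma x_dvd_pcompose_diff_const_iff:
  fixes R :: "'a::comm_ring_1 poly"
  shows "[:0, 1:] dvd pcompose R [:a, 1:] - [:b:] \<longleftrightarrow> poly R a = b"
  using dvd_iff_poly_eq_0[of 0 "pcompose R [:a, 1:] - [:b:]"]
  by (simp add: poly_pcompose)

lemma prod_linear_power_dvd:
  fixes E :: "'a::idom poly" and x :: "nat \<Rightarrow> 'a"
  assumes "\<forall>i<m. [:-x i, 1:] ^ k dvd E" and "\<forall>i<m. \<forall>j<m. i \<noteq> j \<longrightarrow> x i \<noteq> x j"
  shows "(\<Prod>j<m. [:-x j, 1:]) ^ k dvd E"
  using assms
proof (induction m)
  case (Suc m)
  let ?P = "(\<Prod>j<m. [:-x j, 1:]) ^ k"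
  from Suc obtain F where F: "E = ?P * F"
    by (auto elim: dvdE)
  have "[:-x m, 1:] ^ k dvd F"
  proof (cases "F = 0")
    case False
    have "poly ?P (x m) \<noteq> 0"
      using Suc.prems(2) by (auto simp: poly_prod poly_power)
    then have "order (x m) E = order (x m) F"
      using F False order_mult[of ?P F "x m"] by (auto simp: order_0I)
    moreover have "[:-x m, 1:] ^ k dvd E"
      using Suc.prems(1) by simp
    ultimately show ?thesis
      using False F by (simp add: order_divides)
  qed simp
  then have "?P * [:-x m, 1:] ^ k dvd E"
    unfolding F by (rule mult_dvd_mono[OF dvd_refl])
  then show ?case
    by (simp only: prod.lessThan_Suc power_mult_distrib)
qed simp

lemma no_low_monomials_iff_dvd:
  fixes Q :: "'a::comm_ring_1 poly poly"
  shows "no_low_monomials s Q \<longleftrightarrow> (\<forall>j. [:0, 1:] ^ (s - j) dvd coeff Q j)"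
proof -
  have "[:0, 1:] ^ m = (monom 1 m :: 'a poly)" for m
    by (simp add: monom_altdef)
  then show ?thesis
    by (auto simp: no_low_monomials_def monom_1_dvd_iff' less_diff_conv)
qed

lemma no_low_monomials_const_iff:
  fixes p :: "'a::comm_ring_1 poly"
  shows "no_low_monomials s [:p:] \<longleftrightarrow> [:0, 1:] ^ s dvd p"
  by (auto simp: no_low_monomials_iff_dvd coeff_pCons split: nat.splits)

lemma no_low_monomials_diff:
  "no_low_monomials s P \<Longrightarrow> no_low_monomials s Q \<Longrightarrow> no_low_monomials s (P - Q)"
  by (simp add: no_low_monomials_def)

lemma no_low_monomials_linear_mult:
  fixes P :: "'a::comm_ring_1 poly poly"
  assumes c: "[:0, 1:] dvd c" and P: "no_low_monomials s P"
  shows "no_low_monomials (s + 1) ([:-c, 1:] * P)"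
  unfolding no_low_monomials_iff_dvd
proof
  fix j
  have "[:0, 1:] * [:0, 1:] ^ (s - j) dvd c * coeff P j"
    using P by (intro mult_dvd_mono[OF c]) (simp add: no_low_monomials_iff_dvd)
  then have "[:0, 1:] ^ (s + 1 - j) dvd c * coeff P j"
    by (rule dvd_trans[rotated]) (simp add: le_imp_power_dvd flip: power_Suc)
  moreover have "[:0, 1:] ^ (s + 1 - Suc i) dvd coeff P i" for i
    using P by (simp add: no_low_monomials_iff_dvd)
  ultimately show "[:0, 1:] ^ (s + 1 - j) dvd coeff ([:-c, 1:] * P) j"
    by (cases j) (simp_all add: coeff_pCons)
qed

lemma no_low_monomials_linear_mult_cancel:
  fixes P :: "'a::comm_ring_1 poly poly"
  assumes c: "[:0, 1:] dvd c" and cP: "no_low_monomials (s + 1) ([:-c, 1:] * P)"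
  shows "no_low_monomials s P"
proof -
  have "s - j \<le> d \<Longrightarrow> [:0, 1:] ^ (s - j) dvd coeff P j" for d j
  proof (induction d arbitrary: j)
    case (Suc d)
    show ?case
    proof (cases "s - j = Suc d")
      case True
      then have "[:0, 1:] ^ (s - Suc j) dvd coeff P (Suc j)"
        using Suc.IH by simp
      then have "[:0, 1:] * [:0, 1:] ^ (s - Suc j) dvd c * coeff P (Suc j)"
        by (rule mult_dvd_mono[OF c])
      then have "[:0, 1:] ^ (s - j) dvd c * coeff P (Suc j)"
        using True by (simp add: Suc_diff_Suc flip: power_Suc)
      moreover have "[:0, 1:] ^ (s - j) dvd - (c * coeff P (Suc j)) + coeff P j"
      proof -
        have "[:0, 1:] ^ (s + 1 - Suc j) dvd coeff ([:-c, 1:] * P) (Suc j)"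
          using cP unfolding no_low_monomials_iff_dvd ..
        then show ?thesis
          by simp
      qed
      ultimately have "[:0, 1:] ^ (s - j) dvd c * coeff P (Suc j) + (- (c * coeff P (Suc j)) + coeff P j)"
        by (rule dvd_add)
      then show ?thesis
        by simp
    qed (use Suc in simp)
  qed simp
  then show ?thesis
    by (auto simp: no_low_monomials_iff_dvd)
qed

lemma no_low_monomials_poly_dvd:
  fixes S :: "'a::comm_ring_1 poly poly"
  assumes S: "no_low_monomials s S" and T: "[:0, 1:] dvd T"
  shows "[:0, 1:] ^ s dvd poly S T"
  unfolding poly_altdef
proof (rule dvd_sum)
  fix j
  have "[:0, 1:] ^ (s - j) * [:0, 1:] ^ j dvd coeff S j * T ^ j"
    using S T by (simp add: no_low_monomials_iff_dvd mult_dvd_mono dvd_power_same)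
  then show "[:0, 1:] ^ s dvd coeff S j * T ^ j"
    by (rule dvd_trans[rotated]) (simp add: le_imp_power_dvd flip: power_add)
qed

lemma shiftXY_add: "shiftXY (P + Q) a b = shiftXY P a b + shiftXY Q a b"
  by (simp add: shiftXY_def map_poly_hom_add pcompose_add)

lemma shiftXY_mult: "shiftXY (P * Q) a b = shiftXY P a b * shiftXY Q a b"
  by (simp add: shiftXY_def map_poly_hom_mult pcompose_add pcompose_mult)

lemma shiftXY_diff: "shiftXY (P - Q) a b = shiftXY P a b - shiftXY Q a b"
  using shiftXY_add[of "P - Q" Q a b] by (simp add: algebra_simps)

lemma shiftXY_const: "shiftXY [:p:] a b = [:pcompose p [:a, 1:]:]"
  by (simp add: shiftXY_def map_poly_pCons)

lemma shiftXY_linear: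
  "shiftXY [:-R, 1:] a b = [:-(pcompose R [:a, 1:] - [:b:]), 1:]"
  by (simp add: shiftXY_def map_poly_pCons pcompose_pCons pcompose_uminus pcompose_1)

lemma pcompose_poly_shiftXY:
  "pcompose (poly Q R) [:a, 1:] = poly (shiftXY Q a b) (pcompose R [:a, 1:] - [:b:])"
proof -
  have "pcompose (poly Q R) [:a, 1:]
      = poly (map_poly (\<lambda>c. pcompose c [:a, 1:]) Q) (pcompose R [:a, 1:])"
    by (induction Q) (simp_all add: map_poly_pCons pcompose_add pcompose_mult)
  then show ?thesis
    by (simp add: shiftXY_def poly_pcompose)
qed

lemma is_module_basis_linear_independent:
  assumes "is_module_basis M k B" and "0 \<in> M"
    and "\<forall>i\<ge>k. c i = 0" and "(\<Sum>i<k. smult (c i) (B i)) = 0"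
  shows "c = (\<lambda>_. 0)"
proof -
  have "\<exists>!c. (\<forall>i\<ge>k. c i = 0) \<and> 0 = (\<Sum>i<k. smult (c i) (B i))"
    using assms(1,2) unfolding is_module_basis_def by blast
  then obtain c0 where c0: "\<And>c'. (\<forall>i\<ge>k. c' i = 0) \<and> 0 = (\<Sum>i<k. smult (c' i) (B i)) \<Longrightarrow> c' = c0"
    by blast
  have "c = c0"
    using assms(3,4) by (intro c0) simp
  moreover have "(\<lambda>_. 0) = c0"
    by (intro c0) simp
  ultimately show ?thesis
    by simp
qed

lemma sum_adjoin_split:
  "(\<Sum>i<k + 1. smult (c i) (if i = 0 then [:H:] else B (i - 1) * L))
     = [:c 0 * H:] + (\<Sum>i<k. smult (c (Suc i)) (B i)) * L"
  by (simp add: sum.lessThan_Suc_shift sum_distrib_right del: sum.lessThan_Suc)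

lemma is_module_basis_adjoin:
  fixes H R :: "'a::idom poly" and B :: "nat \<Rightarrow> 'a poly poly"
  defines "L \<equiv> [:-R, 1:]"
  assumes basis: "is_module_basis M k B" and "0 \<in> M" and "H \<noteq> 0"
    and H_mem: "[:H:] \<in> M'" and mult_mem: "\<And>P. P \<in> M \<Longrightarrow> P * L \<in> M'"
    and decompose: "\<And>Q. Q \<in> M' \<Longrightarrow> \<exists>e. \<exists>P\<in>M. Q = [:e * H:] + P * L"
  shows "is_module_basis M' (k + 1) (\<lambda>i. if i = 0 then [:H:] else B (i - 1) * L)"
  unfolding is_module_basis_def
proof (intro conjI allI impI ballI)
  show "(if i = 0 then [:H:] else B (i - 1) * L) \<in> M'" if "i < k + 1" for i
    using that basis H_mem mult_mem by (simp add: is_module_basis_def)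
  fix Q assume "Q \<in> M'"
  then obtain e P where P: "P \<in> M" and Q: "Q = [:e * H:] + P * L"
    using decompose by blast
  then obtain d where d: "\<forall>i\<ge>k. d i = 0" "P = (\<Sum>i<k. smult (d i) (B i))"
    using basis by (auto simp: is_module_basis_def)
  let ?rep = "\<lambda>c. (\<forall>i\<ge>k + 1. c i = 0) \<and>
      Q = (\<Sum>i<k + 1. smult (c i) (if i = 0 then [:H:] else B (i - 1) * L))"
  let ?c = "\<lambda>i. if i = 0 then e else d (i - 1)"
  have rep: "?rep ?c"
    using d by (subst sum_adjoin_split) (simp add: Q)
  show "\<exists>!c. ?rep c"
  proof (rule ex1I[of ?rep ?c, OF rep])
    fix c assume c: "?rep c"
    define S where "S = (\<Sum>i<k. smult (c (Suc i) - d i) (B i))"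
    have "Q = [:c 0 * H:] + (\<Sum>i<k. smult (c (Suc i)) (B i)) * L"
      using c by (simp only: sum_adjoin_split)
    moreover have "P + S = (\<Sum>i<k. smult (c (Suc i)) (B i))"
      by (simp add: S_def d(2) smult_diff_left sum_subtractf)
    ultimately have eq: "[:c 0 * H:] + (P + S) * L = [:e * H:] + P * L"
      using Q by simp
    have "c 0 * H = e * H"
      using arg_cong[OF eq, of "\<lambda>Q. poly Q R"] by (simp add: L_def)
    then have "c 0 = e"
      using \<open>H \<noteq> 0\<close> by simp
    with eq have "(P + S) * L = P * L"
      by simp
    moreover have "L \<noteq> 0"
      by (simp add: L_def)
    ultimately have "S = 0"
      by (metis mult_right_cancel add_cancel_right_right)
    then have "(\<lambda>i. c (Suc i) - d i) = (\<lambda>_. 0)"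
      using is_module_basis_linear_independent[OF basis \<open>0 \<in> M\<close>] c d(1) by (simp add: S_def)
    with \<open>c 0 = e\<close> show "c = ?c"
      by (auto simp: fun_eq_iff gr0_conv_Suc)
  qed
qed

lemma zero_in_M_mod: "0 \<in> M_mod \<alpha> b n s l"
  by (simp add: M_mod_def shiftXY_def no_low_monomials_def)

lemma const_in_M_mod:
  fixes E :: "'a::comm_ring_1 poly"
  assumes "\<forall>i<n. [:-\<alpha> i, 1:] ^ s dvd E"
  shows "[:E:] \<in> M_mod \<alpha> b n s l"
  using assms by (simp add: M_mod_def shiftXY_const no_low_monomials_const_iff linear_power_dvd_iff_pcompose)

lemma M_mod_mult_linear:
  fixes R :: "'a::comm_ring_1 poly"
  assumes R: "\<forall>i<n. poly R (\<alpha> i) = b i" and Q: "Q \<in> M_mod \<alpha> b n s l"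
  shows "Q * [:-R, 1:] \<in> M_mod \<alpha> b n (s + 1) (l + 1)"
proof -
  have "degree (Q * [:-R, 1:]) \<le> l + 1"
    using Q degree_mult_le[of Q "[:-R, 1:]"] by (simp add: M_mod_def)
  moreover have "no_low_monomials (s + 1) (shiftXY (Q * [:-R, 1:]) (\<alpha> i) (b i))" if "i < n" for i
  proof -
    have "no_low_monomials (s + 1)
        ([:-(pcompose R [:\<alpha> i, 1:] - [:b i:]), 1:] * shiftXY Q (\<alpha> i) (b i))"
      using Q R that by (intro no_low_monomials_linear_mult) (simp_all add: M_mod_def x_dvd_pcompose_diff_const_iff)
    then show ?thesis
      by (subst mult.commute) (simp only: shiftXY_mult shiftXY_linear)
  qed
  ultimately show ?thesis
    by (simp add: M_mod_def)
qed

lemma linear_power_dvd_poly_of_M_mod: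
  fixes R :: "'a::comm_ring_1 poly"
  assumes R: "\<forall>i<n. poly R (\<alpha> i) = b i" and Q: "Q \<in> M_mod \<alpha> b n s l" and "i < n"
  shows "[:-\<alpha> i, 1:] ^ s dvd poly Q R"
  using assms unfolding linear_power_dvd_iff_pcompose pcompose_poly_shiftXY[where b = "b i"]
  by (intro no_low_monomials_poly_dvd) (simp_all add: M_mod_def x_dvd_pcompose_diff_const_iff)

lemma synthetic_div_in_M_mod:
  fixes R :: "'a::comm_ring_1 poly"
  assumes R: "\<forall>i<n. poly R (\<alpha> i) = b i" and Q: "Q \<in> M_mod \<alpha> b n (s + 1) (l + 1)"
  shows "synthetic_div Q R \<in> M_mod \<alpha> b n s l"
proof -
  have "degree (synthetic_div Q R) \<le> l"
    using Q by (auto simp: M_mod_def degree_synthetic_div)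
  moreover have "no_low_monomials s (shiftXY (synthetic_div Q R) (\<alpha> i) (b i))" if "i < n" for i
  proof (rule no_low_monomials_linear_mult_cancel)
    show "[:0, 1:] dvd pcompose R [:\<alpha> i, 1:] - [:b i:]"
      using R that by (simp add: x_dvd_pcompose_diff_const_iff)
    have "[:poly Q R:] \<in> M_mod \<alpha> b n (s + 1) (l + 1)"
      using R Q by (intro const_in_M_mod) (blast intro: linear_power_dvd_poly_of_M_mod)
    then have "no_low_monomials (s + 1) (shiftXY (Q - [:poly Q R:]) (\<alpha> i) (b i))"
      using Q that by (simp add: M_mod_def shiftXY_diff no_low_monomials_diff)
    moreover have "Q - [:poly Q R:] = [:-R, 1:] * synthetic_div Q R"
      using synthetic_div_correct'[of R Q] by (simp add: algebra_simps)
    ultimately show "no_low_monomials (s + 1)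
        ([:-(pcompose R [:\<alpha> i, 1:] - [:b i:]), 1:] * shiftXY (synthetic_div Q R) (\<alpha> i) (b i))"
      by (simp only: shiftXY_mult shiftXY_linear)
  qed
  ultimately show ?thesis
    by (simp add: M_mod_def)
qed

lemma M_mod_decompose:
  fixes R :: "'a::idom poly"
  assumes R: "\<forall>i<n. poly R (\<alpha> i) = b i"
    and distinct: "\<forall>i<n. \<forall>j<n. i \<noteq> j \<longrightarrow> \<alpha> i \<noteq> \<alpha> j"
    and Q: "Q \<in> M_mod \<alpha> b n (s + 1) (l + 1)"
  shows "\<exists>e. \<exists>P\<in>M_mod \<alpha> b n s l.
           Q = [:e * (\<Prod>j<n. [:-\<alpha> j, 1:]) ^ (s + 1):] + P * [:-R, 1:]"
proof -
  have "(\<Prod>j<n. [:-\<alpha> j, 1:]) ^ (s + 1) dvd poly Q R"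
    using R Q distinct by (intro prod_linear_power_dvd) (blast intro: linear_power_dvd_poly_of_M_mod)
  then obtain e where "poly Q R = e * (\<Prod>j<n. [:-\<alpha> j, 1:]) ^ (s + 1)"
    by (auto simp: mult.commute elim!: dvdE)
  then have "Q = [:e * (\<Prod>j<n. [:-\<alpha> j, 1:]) ^ (s + 1):] + synthetic_div Q R * [:-R, 1:]"
    using synthetic_div_correct'[of R Q] by (simp add: mult.commute add.commute)
  then show ?thesis
    using synthetic_div_in_M_mod[OF R Q] by blast
qed

theorem lemma9:
  fixes \<alpha> w r :: "nat \<Rightarrow> 'a::{finite,field}"
    and n s l :: nat
    and R :: "'a poly"
    and B :: "nat \<Rightarrow> 'a poly poly"
  assumes "n < card (UNIV :: 'a set)"
    and "\<forall>i<n. \<forall>j<n. i \<noteq> j \<longrightarrow> \<alpha> i \<noteq> \<alpha> j"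
    and "\<forall>i<n. \<alpha> i \<noteq> 0"
    and "\<forall>i<n. w i \<noteq> 0"
    and "R = 0 \<or> degree R < n"
    and "\<forall>i<n. poly R (\<alpha> i) = r i / w i"
    and "1 \<le> s" and "s \<le> l"
    and "is_module_basis (M_mod \<alpha> (\<lambda>i. r i / w i) n s l) (l + 1) B"
  shows "is_module_basis (M_mod \<alpha> (\<lambda>i. r i / w i) n (s + 1) (l + 1)) (l + 2)
           (\<lambda>i. if i = 0 then [:(\<Prod>j<n. [:- \<alpha> j, 1:]) ^ (s + 1):]
                else B (i - 1) * [:- R, 1:])"
proof -
  let ?G = "\<Prod>j<n. [:-\<alpha> j, 1:]" and ?b = "\<lambda>i. r i / w i"
  have "\<forall>i<n. [:-\<alpha> i, 1:] ^ (s + 1) dvd ?G ^ (s + 1)"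
    by (blast intro: dvd_power_same dvd_prodI finite_lessThan lessThan_iff[THEN iffD2])
  then have G: "[:?G ^ (s + 1):] \<in> M_mod \<alpha> ?b n (s + 1) (l + 1)"
    by (rule const_in_M_mod)
  have "is_module_basis (M_mod \<alpha> ?b n (s + 1) (l + 1)) (l + 1 + 1)
          (\<lambda>i. if i = 0 then [:?G ^ (s + 1):] else B (i - 1) * [:-R, 1:])"
  proof (rule is_module_basis_adjoin[OF assms(9) zero_in_M_mod _ G])
    show "P * [:-R, 1:] \<in> M_mod \<alpha> ?b n (s + 1) (l + 1)" if "P \<in> M_mod \<alpha> ?b n s l" for P
      using M_mod_mult_linear[OF assms(6) that] .
    show "\<exists>e. \<exists>P\<in>M_mod \<alpha> ?b n s l. Q = [:e * ?G ^ (s + 1):] + P * [:-R, 1:]"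
      if "Q \<in> M_mod \<alpha> ?b n (s + 1) (l + 1)" for Q
      using M_mod_decompose[OF assms(6,2) that] .
  qed simp
  then show ?thesis
    by (simp add: numeral_2_eq_2)
qed

end
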